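(* Let $K$ be a connected 4-regular simple graph with an odd number of vertices, let $v,w$ be adjacent vertices of $K$ having exactly one common neighbour $c$, let the neighbours of $w$ be $v,a,b,c$ and the neighbours of $v$ be $w,c,d,e$, and let $S=K-\{v,w\}$. There is a fixed-point free involution on $\mathcal{S}_{\{a,b,c\},\{d,e\}}\cup\mathcal{S}_{\{a,b\},\{c,d,e\}}$, and thus $s_{\{a,b,c\},\{d,e\}}+s_{\{a,b\},\{c,d,e\}}\equiv 0\pmod 2$.
   Context: A spanning 2-forest is a spanning forest with exactly two trees (a tree may be a single vertex). For a bipartition $P=\{P_1,P_2\}$ of a subset of $V(S)$, $\mathcal{S}_P$ is the set of bipartitions of $E(S)$ such that one part is the edge set of a spanning tree of $S$ and the other is the edge set of a spanning 2-forest of $S$ with one tree containing all vertices of $P_1$ and the other containing all vertices of $P_2$; $s_P=|\mathcal{S}_P|$. *)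

theory Defs
  imports Main
begin

definition adj :: "'a set set \<Rightarrow> 'a \<Rightarrow> 'a \<Rightarrow> bool" where
  "adj F x y \<longleftrightarrow> {x, y} \<in> F"

definition simple_graph :: "'a set \<Rightarrow> 'a set set \<Rightarrow> bool" where
  "simple_graph V E \<longleftrightarrow> finite V \<and>
     (\<forall>e\<in>E. \<exists>x y. x \<noteq> y \<and> x \<in> V \<and> y \<in> V \<and> e = {x, y})"

definition nbrs :: "'a set set \<Rightarrow> 'a \<Rightarrow> 'a set" where
  "nbrs E x = {y. {x, y} \<in> E}"

definition regular :: "nat \<Rightarrow> 'a set \<Rightarrow> 'a set set \<Rightarrow> bool" where
  "regular k V E \<longleftrightarrow> (\<forall>x\<in>V. card (nbrs E x) = k)"

definition connected_on :: "'a set \<Rightarrow> 'a set set \<Rightarrow> bool" where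
  "connected_on W F \<longleftrightarrow> (\<forall>x\<in>W. \<forall>y\<in>W. (adj F)\<^sup>*\<^sup>* x y)"

definition has_cycle :: "'a set set \<Rightarrow> bool" where
  "has_cycle F \<longleftrightarrow> (\<exists>xs. length xs \<ge> 3 \<and> distinct xs \<and>
      (\<forall>i < length xs. {xs ! i, xs ! ((i + 1) mod length xs)} \<in> F))"

definition spanning_tree :: "'a set \<Rightarrow> 'a set set \<Rightarrow> 'a set set \<Rightarrow> bool" where
  "spanning_tree W ES T \<longleftrightarrow> T \<subseteq> ES \<and> connected_on W T \<and> \<not> has_cycle T"

definition spanning_2forest_sep ::
  "'a set \<Rightarrow> 'a set set \<Rightarrow> 'a set set \<Rightarrow> 'a set \<Rightarrow> 'a set \<Rightarrow> bool" where
  "spanning_2forest_sep W ES F P1 P2 \<longleftrightarrow> F \<subseteq> ES \<and> \<not> has_cycle F \<and>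
     (\<exists>W1 W2. W1 \<noteq> {} \<and> W2 \<noteq> {} \<and> W1 \<inter> W2 = {} \<and> W1 \<union> W2 = W \<and>
        connected_on W1 F \<and> connected_on W2 F \<and>
        (\<forall>x\<in>W1. \<forall>y\<in>W2. {x, y} \<notin> F) \<and>
        P1 \<subseteq> W1 \<and> P2 \<subseteq> W2)"

definition SP :: "'a set \<Rightarrow> 'a set set \<Rightarrow> 'a set \<Rightarrow> 'a set \<Rightarrow> 'a set set set set" where
  "SP W ES P1 P2 = {{T, ES - T} | T. spanning_tree W ES T \<and>
                                      spanning_2forest_sep W ES (ES - T) P1 P2}"

definition sP :: "'a set \<Rightarrow> 'a set set \<Rightarrow> 'a set \<Rightarrow> 'a set \<Rightarrow> nat" where
  "sP W ES P1 P2 = card (SP W ES P1 P2)"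

end

theory Submission
  imports Defs
begin

text \<open>In S = K - {v, w} the vertex c has exactly two neighbours. In a pair {T, F} counted
  by either number, c is joined through T and through F to one of a, b, d, e, so one edge at c
  lies in T and the other in F, and c is a leaf of both. Exchanging these two edges keeps T a
  spanning tree and F a 2-forest separating {a, b} from {d, e}; only the tree of F containing c
  may change. This is an involution on the union of the two sets, which are disjoint because c
  lies in exactly one tree of F, and it has no fixed point because the new tree differs from T
  and is connected while F is not.\<close>

lemma symp_adj: "symp (adj F)"
  by (auto intro: sympI simp: adj_def insert_commute)

lemma rtranclp_adj_sym: "(adj F)\<^sup>*\<^sup>* x y \<Longrightarrow> (adj F)\<^sup>*\<^sup>* y x"
  by (rule sympD[OF symp_rtranclp[OF symp_adj]])

lemma connected_on_subset: "connected_on S F \<Longrightarrow> S' \<subseteq> S \<Longrightarrow> connected_on S' F"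
  unfolding connected_on_def by blast

lemma rtranclp_map:
  assumes "R\<^sup>*\<^sup>* u u'" "\<And>z z'. R z z' \<Longrightarrow> g z = g z' \<or> S (g z) (g z')"
  shows "S\<^sup>*\<^sup>* (g u) (g u')"
  using assms(1)
proof (induction rule: rtranclp_induct)
  case (step y z)
  then show ?case using assms(2)[of y z] by (metis rtranclp.rtrancl_into_rtrancl)
qed simp

definition pendant :: "'a set set \<Rightarrow> 'a \<Rightarrow> 'a \<Rightarrow> bool" where
  "pendant F c y \<longleftrightarrow> y \<noteq> c \<and> {c, y} \<in> F \<and> (\<forall>z. {c, z} \<in> F \<longrightarrow> z = y)"

definition reattach :: "'a set set \<Rightarrow> 'a \<Rightarrow> 'a \<Rightarrow> 'a \<Rightarrow> 'a set set" where
  "reattach F c y x = insert {c, x} (F - {{c, y}})"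

text \<open>Collapsing c onto y turns every step of a path in F into a step of the new forest or a
  loop.\<close>
lemma rtranclp_adj_reattach:
  assumes "(adj F)\<^sup>*\<^sup>* p q" "p \<noteq> c" "q \<noteq> c" "pendant F c y"
  shows "(adj (reattach F c y x))\<^sup>*\<^sup>* p q"
proof -
  let ?g = "\<lambda>u. if u = c then y else u"
  have "(adj (reattach F c y x))\<^sup>*\<^sup>* (?g p) (?g q)"
  proof (rule rtranclp_map[OF assms(1)])
    fix z z' assume "adj F z z'"
    then have "{z, z'} \<in> F" by (simp add: adj_def)
    then show "?g z = ?g z' \<or> adj (reattach F c y x) (?g z) (?g z')"
      using assms(4) by (cases "z = c \<or> z' = c")
        (auto simp: pendant_def adj_def reattach_def insert_commute doubleton_eq_iff)
  qed
  then show ?thesis using assms(2,3) by simp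
qed

lemma cycle_vertex_two_nbrs:
  assumes "length xs \<ge> 3" "distinct xs"
    "\<forall>i<length xs. {xs!i, xs!((i+1) mod length xs)} \<in> F" "c \<in> set xs"
  obtains z1 z2 where "z1 \<noteq> z2" "{c, z1} \<in> F" "{c, z2} \<in> F"
proof -
  let ?n = "length xs"
  obtain i where i: "i < ?n" "xs!i = c" by (metis assms(4) in_set_conv_nth)
  define j where "j = (if i+1 = ?n then 0 else i+1)"
  define k where "k = (if i = 0 then ?n - 1 else i - 1)"
  have j: "j < ?n" "(i+1) mod ?n = j" using i assms(1) by (auto simp: j_def)
  have k: "k < ?n" "(k+1) mod ?n = i" using i assms(1) by (auto simp: k_def)
  have "j \<noteq> k" using i assms(1) by (auto simp: j_def k_def)
  then have "xs!j \<noteq> xs!k" using j k assms(2) by (simp add: nth_eq_iff_index_eq)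
  moreover have "{c, xs!j} \<in> F" using assms(3) i j by metis
  moreover have "{c, xs!k} \<in> F" using assms(3)[rule_format, OF k(1)] k i
    by (simp add: insert_commute)
  ultimately show ?thesis by (rule that)
qed

text \<open>After reattaching, c has a single edge, so it lies on no cycle; a cycle avoiding c
  uses only old edges.\<close>
lemma has_cycle_reattach:
  assumes "\<not> has_cycle F" "pendant F c y"
  shows "\<not> has_cycle (reattach F c y x)"
proof
  let ?H = "reattach F c y x"
  assume "has_cycle ?H"
  then obtain xs where xs: "length xs \<ge> 3" "distinct xs"
    "\<forall>i<length xs. {xs!i, xs!((i+1) mod length xs)} \<in> ?H"
    unfolding has_cycle_def by blast
  show False
  proof (cases "c \<in> set xs")
    case True
    moreover have "z = x" if "{c, z} \<in> ?H" for z
      using that assms(2) by (auto simp: pendant_def reattach_def doubleton_eq_iff)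
    ultimately show False using cycle_vertex_two_nbrs[OF xs] by metis
  next
    case False
    have "{xs!i, xs!((i+1) mod length xs)} \<in> F" if "i < length xs" for i
    proof -
      have "(i+1) mod length xs < length xs" using xs(1) by (intro mod_less_divisor) auto
      then have "xs!i \<noteq> c" "xs!((i+1) mod length xs) \<noteq> c"
        using False that by (metis nth_mem)+
      then show ?thesis using xs(3) that by (auto simp: reattach_def doubleton_eq_iff)
    qed
    then show False using xs(1,2) assms(1) unfolding has_cycle_def by blast
  qed
qed

lemma connected_on_reattach:
  assumes "connected_on S F" "c \<notin> S" "pendant F c y"
  shows "connected_on S (reattach F c y x)"
  using assms rtranclp_adj_reattach unfolding connected_on_def by metis

lemma connected_on_insert_reattach:
  assumes "connected_on S F" "x \<in> S" "c \<notin> S" "pendant F c y"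
  shows "connected_on (insert c S) (reattach F c y x)"
proof -
  let ?H = "reattach F c y x"
  have S: "connected_on S ?H" by (rule connected_on_reattach[OF assms(1,3,4)])
  have cx: "(adj ?H)\<^sup>*\<^sup>* c x" by (simp add: adj_def reattach_def r_into_rtranclp)
  have "(adj ?H)\<^sup>*\<^sup>* c p" if "p \<in> S" for p
    using cx S assms(2) that unfolding connected_on_def by (meson rtranclp_trans)
  then show ?thesis
    using S unfolding connected_on_def by (auto intro: rtranclp_adj_sym)
qed

definition connected_split :: "'a set set \<Rightarrow> 'a set \<Rightarrow> 'a set \<Rightarrow> bool" where
  "connected_split F W1 W2 \<longleftrightarrow> W1 \<noteq> {} \<and> W2 \<noteq> {} \<and> W1 \<inter> W2 = {} \<and>
     connected_on W1 F \<and> connected_on W2 F \<and> (\<forall>x\<in>W1. \<forall>y\<in>W2. {x, y} \<notin> F)"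

lemma spanning_2forest_sep_iff:
  "spanning_2forest_sep W ES F P1 P2 \<longleftrightarrow> F \<subseteq> ES \<and> \<not> has_cycle F \<and>
     (\<exists>W1 W2. connected_split F W1 W2 \<and> W1 \<union> W2 = W \<and> P1 \<subseteq> W1 \<and> P2 \<subseteq> W2)"
  unfolding spanning_2forest_sep_def connected_split_def
  by (intro iffI; elim conjE exE; intro conjI exI; assumption)

lemma connected_split_sym: "connected_split F W1 W2 \<Longrightarrow> connected_split F W2 W1"
  unfolding connected_split_def by (metis inf_commute insert_commute)

lemma connected_split_rtranclp:
  assumes "connected_split F W1 W2" "F \<subseteq> Pow (W1 \<union> W2)" "u \<in> W1" "(adj F)\<^sup>*\<^sup>* u u'"
  shows "u' \<in> W1"
  using assms(4)
proof (induction rule: rtranclp_induct)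
  case (step y z)
  then have "{y, z} \<in> F" by (simp add: adj_def)
  then show ?case using step.IH assms(1,2) unfolding connected_split_def by blast
qed (use assms(3) in simp)

text \<open>Reattaching the pendant vertex c either keeps the two trees or moves c from its tree
  to the other one, according to the side of the new neighbour x.\<close>
lemma connected_split_reattach:
  assumes "connected_split F W1 W2" "c \<in> W1" "y \<in> W1 \<union> W2" "x \<in> W1 \<union> W2" "x \<noteq> c"
    "pendant F c y"
  obtains W1' W2' where "connected_split (reattach F c y x) W1' W2'"
    "W1' \<union> W2' = W1 \<union> W2" "W1 - {c} \<subseteq> W1'" "W2 \<subseteq> W2'"
proof -
  let ?H = "reattach F c y x"
  have ne: "W1 \<noteq> {}" "W2 \<noteq> {}" and disj: "W1 \<inter> W2 = {}"
    and conn: "connected_on W1 F" "connected_on W2 F"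
    and cross: "\<forall>p\<in>W1. \<forall>q\<in>W2. {p, q} \<notin> F"
    using assms(1) unfolding connected_split_def by blast+
  have cy: "{c, y} \<in> F" "y \<noteq> c" using assms(6) by (simp_all add: pendant_def)
  have "y \<in> W1" using cy(1) cross assms(2,3) by blast
  have "c \<notin> W2" using disj assms(2) by blast
  have conn_W1c: "connected_on (W1 - {c}) F" using conn(1) by (rule connected_on_subset) blast
  have conn': "connected_on (W1 - {c}) ?H" "connected_on W2 ?H"
    using connected_on_reattach[OF conn_W1c _ assms(6)]
      connected_on_reattach[OF conn(2) \<open>c \<notin> W2\<close> assms(6)]
    by simp_all
  show ?thesis
  proof (cases "x \<in> W1")
    case True
    have "connected_on (insert c (W1 - {c})) ?H"
      by (rule connected_on_insert_reattach[OF conn_W1c _ _ assms(6)]) (use True assms(5) in auto)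
    then have "connected_on W1 ?H" using assms(2) by (simp add: insert_absorb)
    moreover have "\<forall>p\<in>W1. \<forall>q\<in>W2. {p, q} \<notin> ?H"
      using True cross disj \<open>c \<notin> W2\<close> by (auto simp: reattach_def doubleton_eq_iff)
    ultimately have "connected_split ?H W1 W2"
      using conn'(2) ne disj unfolding connected_split_def by blast
    then show ?thesis by (rule that) auto
  next
    case False
    then have "x \<in> W2" using assms(4) by blast
    have "connected_on (insert c W2) ?H"
      by (rule connected_on_insert_reattach[OF conn(2) \<open>x \<in> W2\<close> \<open>c \<notin> W2\<close> assms(6)])
    moreover have "\<forall>p\<in>W1 - {c}. \<forall>q\<in>insert c W2. {p, q} \<notin> ?H"
    proof (intro ballI notI)
      fix p q assume p: "p \<in> W1 - {c}" and q: "q \<in> insert c W2" and pq: "{p, q} \<in> ?H"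
      show False
      proof (cases "{p, q} = {c, x}")
        case True
        then show False using p \<open>x \<in> W2\<close> disj by (auto simp: doubleton_eq_iff)
      next
        case False
        then have pqF: "{p, q} \<in> F" "{p, q} \<noteq> {c, y}" using pq by (auto simp: reattach_def)
        have "q \<noteq> c"
        proof
          assume "q = c"
          then have "p = y" using pqF(1) assms(6) by (auto simp: pendant_def insert_commute)
          then show False using pqF(2) \<open>q = c\<close> by (simp add: insert_commute)
        qed
        then show False using p q pqF(1) cross by blast
      qed
    qed
    moreover have "W1 - {c} \<noteq> {}" "(W1 - {c}) \<inter> insert c W2 = {}"
      using \<open>y \<in> W1\<close> cy(2) disj by auto
    ultimately have "connected_split ?H (W1 - {c}) (insert c W2)"
      using conn'(1) unfolding connected_split_def by blast
    then show ?thesis by (rule that) (use assms(2) in auto)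
  qed
qed

lemma spanning_tree_reattach:
  assumes "spanning_tree W ES T" "c \<in> W" "pendant T c y" "x \<in> W" "x \<noteq> c" "{c, x} \<in> ES"
  shows "spanning_tree W ES (reattach T c y x)"
proof -
  have "T \<subseteq> ES" "connected_on W T" "\<not> has_cycle T"
    using assms(1) unfolding spanning_tree_def by simp_all
  moreover from \<open>connected_on W T\<close> have "connected_on (W - {c}) T"
    by (rule connected_on_subset) blast
  then have "connected_on (insert c (W - {c})) (reattach T c y x)"
    by (rule connected_on_insert_reattach) (use assms(3-5) in auto)
  moreover have "\<not> has_cycle (reattach T c y x)"
    using \<open>\<not> has_cycle T\<close> assms(3) by (rule has_cycle_reattach)
  ultimately show ?thesis
    using assms(2,6) unfolding spanning_tree_def by (auto simp: reattach_def insert_absorb)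
qed

lemma spanning_2forest_sep_reattach:
  assumes "spanning_2forest_sep W ES F P1 P2" "ES \<subseteq> Pow W" "c \<notin> P1 \<union> P2"
    "pendant F c y" "x \<noteq> c" "{c, x} \<in> ES"
  shows "spanning_2forest_sep W ES (reattach F c y x) P1 P2"
proof -
  obtain W1 W2 where F: "F \<subseteq> ES" "\<not> has_cycle F"
    and split: "connected_split F W1 W2" "W1 \<union> W2 = W" "P1 \<subseteq> W1" "P2 \<subseteq> W2"
    using assms(1) unfolding spanning_2forest_sep_iff by blast
  have "{c, y} \<in> F" using assms(4) by (simp add: pendant_def)
  then have cxy: "c \<in> W" "x \<in> W" "y \<in> W" using assms(2,6) F(1) by auto
  have yx: "y \<in> W1 \<union> W2" "x \<in> W1 \<union> W2" using cxy split(2) by auto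
  have "\<exists>W1' W2'. connected_split (reattach F c y x) W1' W2' \<and>
    W1' \<union> W2' = W \<and> P1 \<subseteq> W1' \<and> P2 \<subseteq> W2'"
  proof (cases "c \<in> W1")
    case True
    from yx obtain A B where "connected_split (reattach F c y x) A B"
      "A \<union> B = W1 \<union> W2" "W1 - {c} \<subseteq> A" "W2 \<subseteq> B"
      by (rule connected_split_reattach[OF split(1) True _ _ assms(5,4)])
    then show ?thesis using split(2-4) assms(3) by blast
  next
    case False
    then have "c \<in> W2" using cxy(1) split(2) by blast
    from yx[unfolded Un_commute[of W1]]
    obtain A B where "connected_split (reattach F c y x) B A"
      "B \<union> A = W2 \<union> W1" "W2 - {c} \<subseteq> B" "W1 \<subseteq> A"
      by (rule connected_split_reattach[OF connected_split_sym[OF split(1)] \<open>c \<in> W2\<close> _ _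
            assms(5,4)])
    then show ?thesis using split(2-4) assms(3) connected_split_sym by blast
  qed
  moreover have "\<not> has_cycle (reattach F c y x)"
    using F(2) assms(4) by (rule has_cycle_reattach)
  ultimately show ?thesis
    unfolding spanning_2forest_sep_iff using F(1) assms(6) by (auto simp: reattach_def)
qed

lemma spanning_2forest_sep_mono:
  assumes "spanning_2forest_sep W ES F P1 P2" "Q1 \<subseteq> P1" "Q2 \<subseteq> P2"
  shows "spanning_2forest_sep W ES F Q1 Q2"
proof -
  obtain W1 W2 where "F \<subseteq> ES" "\<not> has_cycle F" "connected_split F W1 W2" "W1 \<union> W2 = W"
    "P1 \<subseteq> W1" "P2 \<subseteq> W2"
    using assms(1) unfolding spanning_2forest_sep_iff by blast
  with assms(2,3) show ?thesis
    unfolding spanning_2forest_sep_iff by (intro conjI exI[of _ W1] exI[of _ W2]) auto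
qed

lemma spanning_2forest_sep_insert:
  assumes "spanning_2forest_sep W ES F P1 P2" "c \<in> W"
  shows "spanning_2forest_sep W ES F (insert c P1) P2 \<or>
    spanning_2forest_sep W ES F P1 (insert c P2)"
proof -
  obtain W1 W2 where "F \<subseteq> ES" "\<not> has_cycle F" "connected_split F W1 W2" "W1 \<union> W2 = W"
    "P1 \<subseteq> W1" "P2 \<subseteq> W2"
    using assms(1) unfolding spanning_2forest_sep_iff by blast
  with assms(2) show ?thesis
    unfolding spanning_2forest_sep_iff by (cases "c \<in> W1") auto
qed

lemma spanning_2forest_sep_rtranclp:
  assumes "spanning_2forest_sep W ES F P1 P2" "u \<in> P1" "u' \<in> P1"
  shows "(adj F)\<^sup>*\<^sup>* u u'"
proof -
  obtain W1 W2 where "connected_split F W1 W2" "P1 \<subseteq> W1"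
    using assms(1) unfolding spanning_2forest_sep_iff by blast
  then show ?thesis using assms(2,3) unfolding connected_split_def connected_on_def by blast
qed

lemma spanning_2forest_sep_not_rtranclp:
  assumes "spanning_2forest_sep W ES F P1 P2" "ES \<subseteq> Pow W" "u \<in> P1" "u' \<in> P2"
  shows "\<not> (adj F)\<^sup>*\<^sup>* u u'"
proof
  assume path: "(adj F)\<^sup>*\<^sup>* u u'"
  obtain W1 W2 where
    W: "F \<subseteq> ES" "connected_split F W1 W2" "W1 \<union> W2 = W" "P1 \<subseteq> W1" "P2 \<subseteq> W2"
    using assms(1) unfolding spanning_2forest_sep_iff by blast
  have "F \<subseteq> Pow (W1 \<union> W2)" using W(1,3) assms(2) by blast
  then have "u' \<in> W1"
    using connected_split_rtranclp[OF W(2) _ _ path] assms(3) W(4) by blast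
  then show False using assms(4) W(2,5) unfolding connected_split_def by blast
qed

lemma spanning_2forest_sep_not_connected:
  assumes "spanning_2forest_sep W ES F P1 P2" "ES \<subseteq> Pow W" "u \<in> P1" "u' \<in> P2"
  shows "\<not> connected_on W F"
proof -
  obtain W1 W2 where "W1 \<union> W2 = W" "P1 \<subseteq> W1" "P2 \<subseteq> W2"
    using assms(1) unfolding spanning_2forest_sep_iff by blast
  then have "u \<in> W" "u' \<in> W" using assms(3,4) by blast+
  then show ?thesis
    using spanning_2forest_sep_not_rtranclp[OF assms] unfolding connected_on_def by blast
qed

lemma connected_on_edge_at:
  assumes "connected_on S F" "c \<in> S" "u \<in> S" "u \<noteq> c"
  obtains z where "{c, z} \<in> F"
proof -
  have "(adj F)\<^sup>*\<^sup>* c u" using assms(1-3) unfolding connected_on_def by blast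
  then obtain z where "adj F c z" using assms(4) by (metis converse_rtranclpE)
  then show ?thesis using that by (simp add: adj_def)
qed

lemma spanning_2forest_sep_edge_at:
  assumes "spanning_2forest_sep W ES F P1 P2" "c \<in> W" "c \<notin> P1 \<union> P2" "u1 \<in> P1" "u2 \<in> P2"
  obtains z where "{c, z} \<in> F"
proof -
  obtain W1 W2 where W: "connected_split F W1 W2" "W1 \<union> W2 = W" "P1 \<subseteq> W1" "P2 \<subseteq> W2"
    using assms(1) unfolding spanning_2forest_sep_iff by blast
  have conn: "connected_on W1 F" "connected_on W2 F"
    using W(1) unfolding connected_split_def by simp_all
  show ?thesis
  proof (cases "c \<in> W1")
    case True
    with conn(1) show ?thesis
      by (rule connected_on_edge_at[of W1 F c u1]) (use W(3) assms(3,4) that in auto)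
  next
    case False
    then have "c \<in> W2" using W(2) assms(2) by blast
    with conn(2) show ?thesis
      by (rule connected_on_edge_at[of W2 F c u2]) (use W(4) assms(3,5) that in auto)
  qed
qed

lemma SP_insert_Un:
  assumes "c \<in> W"
  shows "SP W ES (insert c P1) P2 \<union> SP W ES P1 (insert c P2) =
    {{T, ES - T} | T. spanning_tree W ES T \<and> spanning_2forest_sep W ES (ES - T) P1 P2}"
proof -
  have "spanning_2forest_sep W ES F (insert c P1) P2 \<or> spanning_2forest_sep W ES F P1 (insert c P2)
    \<longleftrightarrow> spanning_2forest_sep W ES F P1 P2" for F
    using spanning_2forest_sep_insert[OF _ assms] spanning_2forest_sep_mono
    by (metis subset_insertI order_refl)
  then show ?thesis unfolding SP_def by (auto intro: set_eqI)
qed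

lemma SP_insert_disjoint:
  assumes "ES \<subseteq> Pow W" "u \<in> P1"
  shows "SP W ES (insert c P1) P2 \<inter> SP W ES P1 (insert c P2) = {}"
proof (rule ccontr)
  assume "SP W ES (insert c P1) P2 \<inter> SP W ES P1 (insert c P2) \<noteq> {}"
  then obtain X where "X \<in> SP W ES (insert c P1) P2" "X \<in> SP W ES P1 (insert c P2)"
    by blast
  then obtain T1 T2 where T: "{T1, ES - T1} = {T2, ES - T2}"
    "spanning_tree W ES T1" "spanning_2forest_sep W ES (ES - T1) (insert c P1) P2"
    "spanning_2forest_sep W ES (ES - T2) P1 (insert c P2)"
    unfolding SP_def mem_Collect_eq by (elim exE conjE) simp
  have "\<not> connected_on W (ES - T2)"
    using spanning_2forest_sep_not_connected[OF T(4) assms] by blast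
  then have "T1 \<noteq> ES - T2" using T(2) unfolding spanning_tree_def by blast
  then have "T1 = T2" using T(1) by (metis doubleton_eq_iff)
  moreover have "(adj (ES - T1))\<^sup>*\<^sup>* u c"
    by (rule spanning_2forest_sep_rtranclp[OF T(3)]) (use assms(2) in auto)
  moreover have "\<not> (adj (ES - T2))\<^sup>*\<^sup>* u c"
    by (rule spanning_2forest_sep_not_rtranclp[OF T(4) assms]) simp
  ultimately show False by simp
qed

lemma finite_SP: "finite ES \<Longrightarrow> finite (SP W ES P1 P2)"
  by (rule finite_subset[of _ "Pow (Pow ES)"]) (auto simp: SP_def spanning_tree_def)

lemma even_card_fixpoint_free_involution:
  assumes "finite U" "\<forall>X\<in>U. f X \<in> U \<and> f (f X) = X \<and> f X \<noteq> X"
  shows "even (card U)"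
  using assms
proof (induction "card U" arbitrary: U rule: less_induct)
  case less
  show ?case
  proof (cases "U = {}")
    case False
    then obtain X where X: "X \<in> U" by blast
    let ?U' = "U - {X, f X}"
    have sub: "{X, f X} \<subseteq> U" and two: "card {X, f X} = 2" using X less.prems by auto
    then have card: "card ?U' + 2 = card U"
      using less.prems(1) card_Diff_subset[OF _ sub] card_mono[OF less.prems(1) sub]
      by (metis finite_subset le_add_diff_inverse2)
    have "\<forall>Y\<in>?U'. f Y \<in> ?U' \<and> f (f Y) = Y \<and> f Y \<noteq> Y"
    proof
      fix Y assume Y: "Y \<in> ?U'"
      then have fY: "f Y \<in> U" "f (f Y) = Y" "f Y \<noteq> Y" using less.prems(2) by auto
      have "f X \<in> U" "f (f X) = X" using X less.prems(2) by auto
      then have "f Y \<noteq> X" "f Y \<noteq> f X" using Y fY(2) by (metis Diff_iff insertCI)+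
      then show "f Y \<in> ?U' \<and> f (f Y) = Y \<and> f Y \<noteq> Y" using fY by blast
    qed
    then have "even (card ?U')" using less.hyps card less.prems(1) by simp
    then show ?thesis using card by (metis even_add even_numeral)
  qed simp
qed

lemma degree_two_sym_diff:
  assumes "nbrs ES c = {p, q}" "c \<notin> {p, q}" "T \<subseteq> ES" "{c, p} \<in> T" "{c, q} \<notin> T"
  shows "pendant T c p" "pendant (ES - T) c q"
    "sym_diff T {{c, p}, {c, q}} = reattach T c p q"
    "ES - sym_diff T {{c, p}, {c, q}} = reattach (ES - T) c q p"
proof -
  have ES_c: "{c, z} \<in> ES \<longleftrightarrow> z = p \<or> z = q" for z
    using assms(1) unfolding nbrs_def by blast
  have "{c, p} \<noteq> {c, q}" using assms(4,5) by metis
  then show "sym_diff T {{c, p}, {c, q}} = reattach T c p q"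
    "ES - sym_diff T {{c, p}, {c, q}} = reattach (ES - T) c q p"
    using assms(3-5) ES_c by (auto simp: reattach_def)
  show "pendant T c p" "pendant (ES - T) c q"
    using assms(2-5) ES_c unfolding pendant_def by auto
qed

text \<open>c reaches u1 in T and a vertex of P1 or P2 in ES - T, so each of them contains one of
  the two edges at c, and the symmetric difference swaps them.\<close>
lemma spanning_pair_sym_diff:
  assumes "ES \<subseteq> Pow W" "nbrs ES c = {n1, n2}" "c \<notin> {n1, n2}" "c \<notin> P1 \<union> P2"
    "u1 \<in> P1" "u2 \<in> P2"
    "spanning_tree W ES T" "spanning_2forest_sep W ES (ES - T) P1 P2"
  defines "D \<equiv> {{c, n1}, {c, n2}}"
  shows "spanning_tree W ES (sym_diff T D) \<and>
    spanning_2forest_sep W ES (ES - sym_diff T D) P1 P2"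
proof -
  have ES_c: "{c, z} \<in> ES \<longleftrightarrow> z \<in> {n1, n2}" for z
    using assms(2) unfolding nbrs_def by blast
  have T: "T \<subseteq> ES" "connected_on W T" using assms(7) unfolding spanning_tree_def by simp_all
  have W: "c \<in> W" "n1 \<in> W" "n2 \<in> W" using ES_c assms(1) by blast+
  have "u1 \<in> W" using assms(5,8) unfolding spanning_2forest_sep_def by blast
  obtain p where p: "{c, p} \<in> T"
    by (rule connected_on_edge_at[OF T(2) W(1) \<open>u1 \<in> W\<close>]) (use assms(4,5) in blast)
  obtain q where "{c, q} \<in> ES - T"
    by (rule spanning_2forest_sep_edge_at[OF assms(8) W(1) assms(4-6)])
  then have q: "{c, q} \<in> ES" "{c, q} \<notin> T" by simp_all
  have pq: "{p, q} = {n1, n2}" "p \<noteq> q" using p q T(1) ES_c by (auto simp: doubleton_eq_iff)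
  then have D: "D = {{c, p}, {c, q}}" unfolding D_def by (auto simp: doubleton_eq_iff)
  have "nbrs ES c = {p, q}" "c \<notin> {p, q}" using assms(2,3) pq(1) by simp_all
  note sd = degree_two_sym_diff[OF this T(1) p q(2)]
  have "q \<in> W" "p \<noteq> c" "q \<noteq> c" using pq(1) W assms(3) by (auto simp: doubleton_eq_iff)
  have "spanning_tree W ES (reattach T c p q)"
    using spanning_tree_reattach[OF assms(7) W(1) sd(1) \<open>q \<in> W\<close> \<open>q \<noteq> c\<close> q(1)] .
  moreover have "spanning_2forest_sep W ES (reattach (ES - T) c q p) P1 P2"
    using spanning_2forest_sep_reattach[OF assms(8,1,4) sd(2) \<open>p \<noteq> c\<close>] p T(1) by blast
  ultimately show ?thesis unfolding D sd(4) unfolding sd(3) ..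
qed

lemma SP_insert_involution:
  assumes "ES \<subseteq> Pow W" "nbrs ES c = {n1, n2}" "c \<notin> {n1, n2}" "c \<notin> P1 \<union> P2"
    "u1 \<in> P1" "u2 \<in> P2"
  defines "U \<equiv> SP W ES (insert c P1) P2 \<union> SP W ES P1 (insert c P2)"
  shows "\<exists>f. \<forall>X\<in>U. f X \<in> U \<and> f (f X) = X \<and> f X \<noteq> X"
proof -
  define D where "D = {{c, n1}, {c, n2}}"
  define \<sigma> where "\<sigma> Z = sym_diff Z D" for Z :: "'a set set"
  define good where "good T \<longleftrightarrow> spanning_tree W ES T \<and> spanning_2forest_sep W ES (ES - T) P1 P2"
    for T
  have D: "D \<subseteq> ES" "D \<noteq> {}" using assms(2) unfolding D_def nbrs_def by auto
  then have "c \<in> W" using assms(1) unfolding D_def by blast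
  then have U: "U = {{T, ES - T} | T. good T}"
    unfolding U_def good_def by (rule SP_insert_Un)
  have \<sigma>\<sigma>: "\<sigma> (\<sigma> Z) = Z" for Z unfolding \<sigma>_def by blast
  have \<sigma>_compl: "\<sigma> (ES - T) = ES - \<sigma> T" for T unfolding \<sigma>_def using D(1) by blast
  have \<sigma>_good: "good (\<sigma> T)" if "good T" for T
    using spanning_pair_sym_diff[OF assms(1-6)] that unfolding good_def \<sigma>_def D_def by blast
  have \<sigma>_ne: "\<sigma> T \<noteq> T" "\<sigma> T \<noteq> ES - T" if "good T" for T
  proof -
    show "\<sigma> T \<noteq> T" using D(2) unfolding \<sigma>_def by blast
    have "connected_on W (\<sigma> T)" using \<sigma>_good[OF that] unfolding good_def spanning_tree_def by blast
    moreover have "\<not> connected_on W (ES - T)"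
      using that spanning_2forest_sep_not_connected[OF _ assms(1,5,6)] unfolding good_def by blast
    ultimately show "\<sigma> T \<noteq> ES - T" by metis
  qed
  have "image \<sigma> X \<in> U \<and> image \<sigma> (image \<sigma> X) = X \<and> image \<sigma> X \<noteq> X" if "X \<in> U" for X
  proof -
    obtain T where X: "X = {T, ES - T}" "good T" using \<open>X \<in> U\<close> unfolding U by blast
    have fX: "image \<sigma> X = {\<sigma> T, ES - \<sigma> T}" unfolding X(1) by (simp add: \<sigma>_compl)
    have "image \<sigma> X \<in> U"
      unfolding U by (intro CollectI exI[of _ "\<sigma> T"]) (simp add: fX \<sigma>_good[OF X(2)])
    moreover have "image \<sigma> (image \<sigma> X) = X" by (simp add: image_image \<sigma>\<sigma>)
    moreover have "image \<sigma> X \<noteq> X"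
      using fX X(1) \<sigma>_ne[OF X(2)] by (metis doubleton_eq_iff)
    ultimately show ?thesis by blast
  qed
  then show ?thesis by blast
qed

lemma even_sP_insert:
  assumes "finite ES" "ES \<subseteq> Pow W" "nbrs ES c = {n1, n2}" "c \<notin> {n1, n2}" "c \<notin> P1 \<union> P2"
    "u1 \<in> P1" "u2 \<in> P2"
  shows "even (sP W ES (insert c P1) P2 + sP W ES P1 (insert c P2))"
proof -
  have "sP W ES (insert c P1) P2 + sP W ES P1 (insert c P2) =
      card (SP W ES (insert c P1) P2 \<union> SP W ES P1 (insert c P2))"
    unfolding sP_def using assms(1) SP_insert_disjoint[OF assms(2,6)]
    by (simp add: card_Un_disjoint finite_SP)
  moreover have "even (card (SP W ES (insert c P1) P2 \<union> SP W ES P1 (insert c P2)))"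
    using SP_insert_involution[OF assms(2-7)] even_card_fixpoint_free_involution assms(1)
    by (metis finite_SP finite_UnI)
  ultimately show ?thesis by simp
qed

lemma simple_graph_edgeD:
  assumes "simple_graph V E" "{p, q} \<in> E"
  shows "p \<noteq> q \<and> p \<in> V \<and> q \<in> V"
proof -
  obtain x y where "x \<noteq> y" "x \<in> V" "y \<in> V" "{p, q} = {x, y}"
    using assms unfolding simple_graph_def by blast
  then show ?thesis by (metis doubleton_eq_iff)
qed

lemma simple_graph_delete_vertices:
  assumes "simple_graph V E"
  shows "{x \<in> E. v \<notin> x \<and> w \<notin> x} \<subseteq> Pow (V - {v, w})"
proof
  fix x assume x: "x \<in> {x \<in> E. v \<notin> x \<and> w \<notin> x}"
  then obtain p q where "p \<in> V" "q \<in> V" "x = {p, q}"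
    using assms unfolding simple_graph_def by blast
  then show "x \<in> Pow (V - {v, w})" using x by auto
qed

lemma nbrs_delete_vertices:
  "c \<notin> {v, w} \<Longrightarrow> nbrs {x \<in> E. v \<notin> x \<and> w \<notin> x} c = nbrs E c - {v, w}"
  unfolding nbrs_def by auto

lemma regular_4_nbrs_delete_vertices:
  assumes "simple_graph V E" "regular 4 V E" "{c, v} \<in> E" "{c, w} \<in> E" "v \<noteq> w"
  obtains n1 n2 where "nbrs {x \<in> E. v \<notin> x \<and> w \<notin> x} c = {n1, n2}" "c \<notin> {n1, n2}"
proof -
  have "c \<in> V" "c \<notin> {v, w}" using simple_graph_edgeD[OF assms(1)] assms(3,4) by blast+
  have "c \<notin> nbrs E c" using simple_graph_edgeD[OF assms(1)] unfolding nbrs_def by blast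
  have "{v, w} \<subseteq> nbrs E c" using assms(3,4) unfolding nbrs_def by blast
  then have "card (nbrs E c - {v, w}) = 2"
    using assms(2,5) \<open>c \<in> V\<close> unfolding regular_def by (simp add: card_Diff_subset)
  then obtain n1 n2 where "nbrs E c - {v, w} = {n1, n2}" by (meson card_2_iff)
  with nbrs_delete_vertices[OF \<open>c \<notin> {v, w}\<close>] \<open>c \<notin> nbrs E c\<close> show ?thesis
    by (intro that[of n1 n2]) auto
qed

lemma card_eq_4_distinct: "card {p, q, r, s} = 4 \<Longrightarrow> distinct [p, q, r, s]"
  by (rule card_distinct) simp

theorem lemma4p2:
  fixes V :: "'a set" and E :: "'a set set" and v w a b c d e :: 'a
  assumes "simple_graph V E"
    and "regular 4 V E"
    and "connected_on V E"
    and "odd (card V)"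
    and "v \<in> V" and "w \<in> V" and "{v, w} \<in> E"
    and "nbrs E v \<inter> nbrs E w = {c}"
    and "nbrs E w = {v, a, b, c}"
    and "nbrs E v = {w, c, d, e}"
  defines "W \<equiv> V - {v, w}"
    and "ES \<equiv> {x \<in> E. v \<notin> x \<and> w \<notin> x}"
  shows "(\<exists>f. \<forall>X \<in> SP W ES {a, b, c} {d, e} \<union> SP W ES {a, b} {c, d, e}.
             f X \<in> SP W ES {a, b, c} {d, e} \<union> SP W ES {a, b} {c, d, e} \<and>
             f (f X) = X \<and> f X \<noteq> X)
         \<and> even (sP W ES {a, b, c} {d, e} + sP W ES {a, b} {c, d, e})"
proof -
  have "finite V" using assms(1) unfolding simple_graph_def by blast
  moreover have "ES \<subseteq> Pow W"
    unfolding ES_def W_def by (rule simple_graph_delete_vertices[OF assms(1)])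
  ultimately have ES: "ES \<subseteq> Pow W" "finite ES"
    unfolding W_def by (auto intro: finite_subset)
  have deg: "card (nbrs E x) = 4" if "x \<in> V" for x
    using assms(2) that unfolding regular_def by blast
  have "distinct [v, a, b, c]" using deg[OF assms(6)] unfolding assms(9) by (rule card_eq_4_distinct)
  moreover have "distinct [w, c, d, e]"
    using deg[OF assms(5)] unfolding assms(10) by (rule card_eq_4_distinct)
  ultimately have c_PP: "c \<notin> {a, b} \<union> {d, e}" by auto
  have "{c, v} \<in> E" "{c, w} \<in> E" using assms(9,10) unfolding nbrs_def by (auto simp: insert_commute)
  moreover have "v \<noteq> w" using simple_graph_edgeD[OF assms(1,7)] by blast
  ultimately obtain n1 n2 where "nbrs ES c = {n1, n2}" "c \<notin> {n1, n2}"
    unfolding ES_def by (rule regular_4_nbrs_delete_vertices[OF assms(1,2)])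
  note hyps = this c_PP insertI1 insertI1
  have "{a, b, c} = insert c {a, b}" "{c, d, e} = insert c {d, e}" by auto
  then show ?thesis
    using SP_insert_involution[OF ES(1) hyps] even_sP_insert[OF ES(2,1) hyps] by simp
qed

end
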